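(* Let $X$ be a finite nonempty set, $Y$ a nonempty compact metric space, and $u: X\times Y\to\mathbb{R}$ such that $y\mapsto u(x,y)$ is continuous for each $x\in X$. Then for every $\alpha>0$ there exists a bounded measurable function $\hat u: X\times Y\to\mathbb{R}$ such that the game $\hat{\mathcal{G}} = \langle X, Y, \hat u\rangle$ is essentially finite and is an $\alpha$-approximation of $\mathcal{G}=\langle X,Y,u\rangle$, i.e. $|u(x,y)-\hat u(x,y)|\le \alpha$ for all $(x,y)\in X\times Y$.
   Context: A game $\langle X, Y, v\rangle$ is essentially finite if there exist a finite game $\langle \hat X, \hat Y, w\rangle$ (with $\hat X,\hat Y$ finite sets) and measurable maps $f_1: X\to\hat X$, $f_2: Y\to\hat Y$ such that $v(x,y) = w(f_1(x), f_2(y))$ for all $(x,y)\in X\times Y$. A game $\langle X,Y,v'\rangle$ with bounded measurable utility is an $\alpha$-approximation of $\langle X,Y,v\rangle$ if $|v(x,y)-v'(x,y)|\le\alpha$ for all $(x,y)$. *)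

theory Defs
  imports "HOL-Analysis.Analysis"
begin

text \<open>A game on strategy spaces MX, MY (measurable spaces) with utility v.
  Finite strategy sets of the reduced game are taken as finite sets of naturals
  (every finite set is in bijection with one).\<close>

definition essentially_finite ::
  "'a measure \<Rightarrow> 'b measure \<Rightarrow> ('a \<Rightarrow> 'b \<Rightarrow> real) \<Rightarrow> bool" where
  "essentially_finite MX MY v \<longleftrightarrow>
     (\<exists>(Xh :: nat set) (Yh :: nat set) (w :: nat \<Rightarrow> nat \<Rightarrow> real) f1 f2.
        finite Xh \<and> finite Yh \<and>
        f1 \<in> MX \<rightarrow>\<^sub>M count_space Xh \<and> f2 \<in> MY \<rightarrow>\<^sub>M count_space Yh \<and>
        (\<forall>x\<in>space MX. \<forall>y\<in>space MY. v x y = w (f1 x) (f2 y)))"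

definition alpha_approximation ::
  "real \<Rightarrow> 'a set \<Rightarrow> 'b set \<Rightarrow> ('a \<Rightarrow> 'b \<Rightarrow> real) \<Rightarrow> ('a \<Rightarrow> 'b \<Rightarrow> real) \<Rightarrow> bool" where
  "alpha_approximation \<alpha> X Y v' v \<longleftrightarrow> (\<forall>x\<in>X. \<forall>y\<in>Y. \<bar>v x y - v' x y\<bar> \<le> \<alpha>)"

end

theory Submission
  imports Defs
begin

text \<open>Each \<open>u x\<close> is uniformly continuous on the compact set \<open>Y\<close>, and since \<open>X\<close> is finite a
  single \<open>\<delta>\<close> works for all \<open>x\<close>. Cover \<open>Y\<close> by finitely many \<open>\<delta>\<close>-balls centred in \<open>Y\<close> and
  replace each \<open>y\<close> by the centre of the first ball containing it. This moves every \<open>u x y\<close>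
  by less than \<open>\<alpha>\<close>, and the new utility depends on \<open>y\<close> only through a Borel map into a
  finite index set, so the approximating game is essentially finite. Neither \<open>X\<close> nor \<open>Y\<close>
  needs to be nonempty.\<close>

definition first_member_index :: "'a set list \<Rightarrow> 'a \<Rightarrow> nat" where
  "first_member_index As y = (LEAST i. i = length As \<or> y \<in> As ! i)"

lemma first_member_index_eq_iff:
  "first_member_index As y = i \<longleftrightarrow>
     (i = length As \<or> i < length As \<and> y \<in> As ! i) \<and> (\<forall>j<i. y \<notin> As ! j)"
proof
  let ?P = "\<lambda>i. i = length As \<or> y \<in> As ! i"
  assume "first_member_index As y = i"
  then have "?P i" "i \<le> length As" "\<forall>j<i. \<not> ?P j"
    using LeastI[of ?P "length As"] Least_le[of ?P "length As"] not_less_Least[of _ ?P]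
    unfolding first_member_index_def by auto
  then show "(i = length As \<or> i < length As \<and> y \<in> As ! i) \<and> (\<forall>j<i. y \<notin> As ! j)"
    by auto
next
  assume "(i = length As \<or> i < length As \<and> y \<in> As ! i) \<and> (\<forall>j<i. y \<notin> As ! j)"
  then show "first_member_index As y = i"
    unfolding first_member_index_def by (intro Least_equality) (auto simp: not_less[symmetric])
qed

lemma first_member_index_le: "first_member_index As y \<le> length As"
  using first_member_index_eq_iff[of As y "first_member_index As y"] by auto

lemma first_member_index_mem:
  assumes "y \<in> \<Union>(set As)"
  shows "first_member_index As y < length As" and "y \<in> As ! first_member_index As y"
proof -
  obtain j where "j < length As" "y \<in> As ! j"
    using assms by (auto simp: in_set_conv_nth)
  then show "first_member_index As y < length As" "y \<in> As ! first_member_index As y"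
    using first_member_index_eq_iff[of As y "first_member_index As y"] by auto
qed

lemma measurable_first_member_index:
  assumes "set As \<subseteq> sets M"
  shows "first_member_index As \<in> M \<rightarrow>\<^sub>M count_space {..length As}"
  unfolding measurable_count_space_eq2_countable
proof (intro conjI ballI)
  show "first_member_index As \<in> space M \<rightarrow> {..length As}"
    using first_member_index_le by auto
next
  fix i assume "i \<in> {..length As}"
  then have "first_member_index As -` {i} \<inter> space M =
      (if i = length As then space M else As ! i) - (\<Union>j<i. As ! j)"
  proof (intro set_eqI)
    fix y
    have "As ! i \<subseteq> space M" if "i < length As"
      using assms that by (intro sets.sets_into_space) auto
    then show "y \<in> first_member_index As -` {i} \<inter> space M \<longleftrightarrow>
        y \<in> (if i = length As then space M else As ! i) - (\<Union>j<i. As ! j)"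
      using \<open>i \<in> {..length As}\<close>
      unfolding vimage_singleton_eq Int_iff first_member_index_eq_iff by auto
  qed
  also have "\<dots> \<in> sets M"
  proof -
    have "As ! j \<in> sets M" if "j < length As" for j
      using assms that by auto
    then show ?thesis
      using \<open>i \<in> {..length As}\<close> by (auto intro!: sets.Diff sets.finite_UN)
  qed
  finally show "first_member_index As -` {i} \<inter> space M \<in> sets M" .
qed

lemma finite_family_uniformly_equicontinuous:
  fixes u :: "'a \<Rightarrow> 'b::metric_space \<Rightarrow> 'c::metric_space"
  assumes "finite X" and "compact Y" and "\<And>x. x \<in> X \<Longrightarrow> continuous_on Y (u x)" and "\<epsilon> > 0"
  obtains \<delta> where "\<delta> > 0"
    and "\<And>x y y'. x \<in> X \<Longrightarrow> y \<in> Y \<Longrightarrow> y' \<in> Y \<Longrightarrow> dist y' y < \<delta> \<Longrightarrow> dist (u x y') (u x y) < \<epsilon>"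
proof -
  have "\<forall>x\<in>X. \<exists>d>0. \<forall>y\<in>Y. \<forall>y'\<in>Y. dist y' y < d \<longrightarrow> dist (u x y') (u x y) < \<epsilon>"
    using assms compact_uniformly_continuous unfolding uniformly_continuous_on_def by blast
  then obtain d where d: "\<And>x. x \<in> X \<Longrightarrow> d x > 0"
    "\<And>x y y'. x \<in> X \<Longrightarrow> y \<in> Y \<Longrightarrow> y' \<in> Y \<Longrightarrow> dist y' y < d x \<Longrightarrow> dist (u x y') (u x y) < \<epsilon>"
    by metis
  show thesis
  proof
    show "Min (insert 1 (d ` X)) > 0"
      using assms(1) d(1) by auto
    show "dist (u x y') (u x y) < \<epsilon>"
      if "x \<in> X" "y \<in> Y" "y' \<in> Y" "dist y' y < Min (insert 1 (d ` X))" for x y y'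
      using d(2)[OF that(1-3)] that(4) Min_le[of "insert 1 (d ` X)" "d x"] assms(1) \<open>x \<in> X\<close>
      by auto
  qed
qed

lemma compact_obtain_ball_cover_list:
  fixes Y :: "'a::metric_space set"
  assumes "compact Y" and "\<delta> > 0"
  obtains cs where "set cs \<subseteq> Y" and "Y \<subseteq> (\<Union>c\<in>set cs. ball c \<delta>)"
proof -
  obtain C where "C \<subseteq> Y" "finite C" "Y \<subseteq> (\<Union>c\<in>C. ball c \<delta>)"
    using compactE_image[OF assms(1), of Y "\<lambda>c. ball c \<delta>"] assms(2) by force
  with finite_list[of C] that show thesis by blast
qed

lemma compact_obtain_measurable_quantizer:
  fixes Y :: "'a::metric_space set"
  assumes "compact Y" and "\<delta> > 0"
  obtains cs :: "'a list" and q :: "'a \<Rightarrow> nat"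
  where "q \<in> restrict_space borel Y \<rightarrow>\<^sub>M count_space {..length cs}"
    and "\<And>y. y \<in> Y \<Longrightarrow> cs ! q y \<in> Y \<and> dist (cs ! q y) y < \<delta>"
proof -
  obtain cs where cs: "set cs \<subseteq> Y" "Y \<subseteq> (\<Union>c\<in>set cs. ball c \<delta>)"
    using compact_obtain_ball_cover_list[OF assms] by blast
  define q where "q = first_member_index (map (\<lambda>c. ball c \<delta>) cs)"
  have "set (map (\<lambda>c. ball c \<delta>) cs) \<subseteq> sets borel"
    by auto
  from measurable_first_member_index[OF this]
  have "q \<in> restrict_space borel Y \<rightarrow>\<^sub>M count_space {..length cs}"
    unfolding q_def by (intro measurable_restrict_space1) simp
  moreover have "cs ! q y \<in> Y \<and> dist (cs ! q y) y < \<delta>" if "y \<in> Y" for y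
  proof -
    have "y \<in> \<Union>(set (map (\<lambda>c. ball c \<delta>) cs))"
      using cs(2) \<open>y \<in> Y\<close> unfolding set_map by (rule subsetD)
    note index = first_member_index_mem[OF this, folded q_def]
    then have "q y < length cs"
      by simp
    with index cs(1) show ?thesis
      by (simp add: subset_code(1))
  qed
  ultimately show thesis
    using that by blast
qed

lemma measurable_pair_count_space_compose:
  fixes g :: "'a \<Rightarrow> 'n \<Rightarrow> real"
  assumes "countable X" and "f \<in> M \<rightarrow>\<^sub>M count_space N"
  shows "(\<lambda>(x, y). g x (f y)) \<in> borel_measurable (count_space X \<Otimes>\<^sub>M M)"
proof (rule measurable_pair_measure_countable1[OF assms(1)])
  fix x
  show "(\<lambda>y. case (x, y) of (x, y) \<Rightarrow> g x (f y)) \<in> borel_measurable M"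
    using measurable_comp[OF assms(2), of "g x" borel] by (simp add: o_def)
qed

lemma bounded_on_compose_finite:
  fixes g :: "'a \<Rightarrow> 'n \<Rightarrow> real"
  assumes "finite X" and "finite N" and "f ` Y \<subseteq> N"
  shows "\<exists>B. \<forall>x\<in>X. \<forall>y\<in>Y. \<bar>g x (f y)\<bar> \<le> B"
proof (intro exI ballI)
  fix x y assume "x \<in> X" "y \<in> Y"
  then have "(x, f y) \<in> X \<times> N"
    using assms(3) by auto
  then show "\<bar>g x (f y)\<bar> \<le> (\<Sum>(x', j)\<in>X \<times> N. \<bar>g x' j\<bar>)"
    using member_le_sum[of "(x, f y)" "X \<times> N" "\<lambda>(x', j). \<bar>g x' j\<bar>"] assms(1,2) by auto
qed

lemma essentially_finite_compose_count_space:
  fixes f :: "'b \<Rightarrow> nat" and g :: "'a \<Rightarrow> nat \<Rightarrow> real"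
  assumes "finite X" and "finite N" and "f \<in> M \<rightarrow>\<^sub>M count_space N"
  shows "essentially_finite (count_space X) M (\<lambda>x y. g x (f y))"
proof -
  obtain e where e: "bij_betw e X {..<card X}"
    using assms(1) by (metis ex_bij_betw_finite_nat lessThan_atLeast0)
  show ?thesis
    unfolding essentially_finite_def
  proof (intro exI conjI)
    show "finite {..<card X}"
      by simp
    show "finite N"
      by (rule assms(2))
    show "f \<in> M \<rightarrow>\<^sub>M count_space N"
      by (rule assms(3))
    show "e \<in> count_space X \<rightarrow>\<^sub>M count_space {..<card X}"
      using e by (auto simp: bij_betw_def)
    show "\<forall>x\<in>space (count_space X). \<forall>y\<in>space M. g x (f y) = g (inv_into X e (e x)) (f y)"
      using e by (simp add: bij_betw_def)
  qed
qed

theorem proposition4: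
  fixes X :: "'a set" and Y :: "'b::metric_space set" and u :: "'a \<Rightarrow> 'b \<Rightarrow> real"
    and \<alpha> :: real
  assumes "finite X" and "X \<noteq> {}"
    and "compact Y" and "Y \<noteq> {}"
    and "\<forall>x\<in>X. continuous_on Y (u x)"
    and "\<alpha> > 0"
  shows "\<exists>uh :: 'a \<Rightarrow> 'b \<Rightarrow> real.
           (\<lambda>(x, y). uh x y) \<in> borel_measurable (count_space X \<Otimes>\<^sub>M restrict_space borel Y) \<and>
           (\<exists>B. \<forall>x\<in>X. \<forall>y\<in>Y. \<bar>uh x y\<bar> \<le> B) \<and>
           essentially_finite (count_space X) (restrict_space borel Y) uh \<and>
           alpha_approximation \<alpha> X Y uh u"
proof -
  obtain \<delta> where \<delta>: "\<delta> > 0"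
    "\<And>x y y'. x \<in> X \<Longrightarrow> y \<in> Y \<Longrightarrow> y' \<in> Y \<Longrightarrow> dist y' y < \<delta> \<Longrightarrow> dist (u x y') (u x y) < \<alpha>"
    using finite_family_uniformly_equicontinuous[of X Y u \<alpha>] assms by blast
  obtain cs q where q: "q \<in> restrict_space borel Y \<rightarrow>\<^sub>M count_space {..length cs}"
    and centre: "\<And>y. y \<in> Y \<Longrightarrow> cs ! q y \<in> Y \<and> dist (cs ! q y) y < \<delta>"
    using compact_obtain_measurable_quantizer[OF assms(3) \<delta>(1)] by blast
  have approx: "\<bar>u x y - u x (cs ! q y)\<bar> \<le> \<alpha>" if "x \<in> X" "y \<in> Y" for x y
  proof -
    have "dist (u x (cs ! q y)) (u x y) < \<alpha>"
      using \<delta>(2)[OF that] centre[OF \<open>y \<in> Y\<close>] by blast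
    then show ?thesis
      by (simp add: dist_real_def)
  qed
  have range: "q ` Y \<subseteq> {..length cs}"
    using measurable_space[OF q] by (auto simp: space_restrict_space)
  show ?thesis
  proof (intro exI[of _ "\<lambda>x y. u x (cs ! q y)"] conjI)
    show "(\<lambda>(x, y). u x (cs ! q y)) \<in> borel_measurable (count_space X \<Otimes>\<^sub>M restrict_space borel Y)"
      using countable_finite[OF assms(1)] q
      by (rule measurable_pair_count_space_compose[where g = "\<lambda>x j. u x (cs ! j)"])
    show "\<exists>B. \<forall>x\<in>X. \<forall>y\<in>Y. \<bar>u x (cs ! q y)\<bar> \<le> B"
      using assms(1) finite_atMost range
      by (rule bounded_on_compose_finite[where g = "\<lambda>x j. u x (cs ! j)"])
    show "essentially_finite (count_space X) (restrict_space borel Y) (\<lambda>x y. u x (cs ! q y))"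
      using assms(1) finite_atMost q
      by (rule essentially_finite_compose_count_space[where g = "\<lambda>x j. u x (cs ! j)"])
    show "alpha_approximation \<alpha> X Y (\<lambda>x y. u x (cs ! q y)) u"
      unfolding alpha_approximation_def using approx by blast
  qed
qed

end
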